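(* Let $\mathcal W,\mathcal U,\mathcal V$ be finite, $\Phi_{U|W}$ a codebook distribution and $\Phi_{V|W,U}$ a memoryless channel, with $\Phi_{V|W}=\sum_u\Phi_{U|W}\Phi_{V|W,U}$. Let $\mathcal B^{(n)}=\{u^n(w^n,j):w^n\in\mathcal W^n, j\in[2^{nR}]\}$ have independent entries with $u^n(w^n,j)\sim\prod_t\Phi_{U|W}(\cdot|w_t)$, and for each $w^n$ define $P_{V^n|W^n=w^n}(v^n)=2^{-nR}\sum_{j}\prod_{t=1}^n\Phi_{V|W,U}(v_t|w_t,u_t(w^n,j))$ and $Q_{V^n|W^n=w^n}(v^n)=\prod_t\Phi_{V|W}(v_t|w_t)$. Let $(\gamma_n)$ satisfy $\gamma_n\sqrt n\to\infty$. Then there exists a sequence $\epsilon_n\to0$, depending only on $\Phi_{U,V|W}$ and $(\gamma_n)$, such that for every $n$ and every $w^n\in\mathcal W^n$ with $R>I_{\mathbb P\Phi}(U;V|W)+\gamma_n$, $$\mathbf E\|P_{V^n|W^n=w^n}-Q_{V^n|W^n=w^n}\|_{TV}<\epsilon_n.$$ If $\gamma_n=\gamma>0$ is constant, $\epsilon_n$ can be chosen to decay exponentially in $n$.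
   Context: The empirical distribution of $w^n$ is $\mathbb P_{w^n}(w)=\frac1n\sum_t\mathbf 1(w_t=w)$; $I_{\mathbb P\Phi}(U;V|W)$ is computed under $\mathbb P_{w^n}(w)\Phi_{U,V|W}(u,v|w)$. Expectation over the random codebook; total variation is half the $\ell_1$ distance; logarithms base 2. *)

theory Defs
  imports "HOL-Probability.Probability"
begin

definition words :: "nat \<Rightarrow> 'a list set" where
  "words n = {xs. length xs = n}"

definition chanVW :: "('w \<Rightarrow> 'u pmf) \<Rightarrow> ('w \<Rightarrow> 'u \<Rightarrow> 'v pmf) \<Rightarrow> 'w \<Rightarrow> 'v pmf" where
  "chanVW PhiU PhiV w = bind_pmf (PhiU w) (PhiV w)"

definition empdist :: "'w list \<Rightarrow> 'w \<Rightarrow> real" where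
  "empdist ws w = real (card {t. t < length ws \<and> ws ! t = w}) / real (length ws)"

definition condMI :: "('w::finite \<Rightarrow> real) \<Rightarrow> ('w \<Rightarrow> 'u::finite pmf) \<Rightarrow> ('w \<Rightarrow> 'u \<Rightarrow> 'v::finite pmf) \<Rightarrow> real" where
  "condMI P PhiU PhiV =
     (\<Sum>w\<in>UNIV. \<Sum>u\<in>UNIV. \<Sum>v\<in>UNIV.
        (let p = P w * pmf (PhiU w) u * pmf (PhiV w u) v in
         if p = 0 then 0
         else p * log 2 (pmf (PhiV w u) v / pmf (chanVW PhiU PhiV w) v)))"

text \<open>Codebook size: [2^{nR}] read as {0..< ceiling(2^{nR})}.\<close>
definition cbsize :: "nat \<Rightarrow> real \<Rightarrow> nat" where
  "cbsize n R = nat \<lceil>2 powr (real n * R)\<rceil>"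

definition codebook_pmf :: "('w::finite \<Rightarrow> 'u pmf) \<Rightarrow> nat \<Rightarrow> real \<Rightarrow> ('w list \<times> nat \<Rightarrow> nat \<Rightarrow> 'u) pmf" where
  "codebook_pmf PhiU n R =
     Pi_pmf (words n \<times> {..<cbsize n R}) undefined
       (\<lambda>(ws, j). Pi_pmf {..<n} undefined (\<lambda>t. PhiU (ws ! t)))"

definition outP :: "('w \<Rightarrow> 'u \<Rightarrow> 'v pmf) \<Rightarrow> nat \<Rightarrow> real \<Rightarrow> ('w list \<times> nat \<Rightarrow> nat \<Rightarrow> 'u)
                     \<Rightarrow> 'w list \<Rightarrow> 'v list \<Rightarrow> real" where
  "outP PhiV n R C ws vs =
     (1 / real (cbsize n R)) * (\<Sum>j<cbsize n R. \<Prod>t<n. pmf (PhiV (ws ! t) (C (ws, j) t)) (vs ! t))"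

definition outQ :: "('w \<Rightarrow> 'u pmf) \<Rightarrow> ('w \<Rightarrow> 'u \<Rightarrow> 'v pmf) \<Rightarrow> nat \<Rightarrow> 'w list \<Rightarrow> 'v list \<Rightarrow> real" where
  "outQ PhiU PhiV n ws vs = (\<Prod>t<n. pmf (chanVW PhiU PhiV (ws ! t)) (vs ! t))"

definition tv_dist :: "nat \<Rightarrow> ('v list \<Rightarrow> real) \<Rightarrow> ('v list \<Rightarrow> real) \<Rightarrow> real" where
  "tv_dist n P Q = (1/2) * (\<Sum>vs\<in>words n. \<bar>P vs - Q vs\<bar>)"

definition exp_tv :: "('w::finite \<Rightarrow> 'u pmf) \<Rightarrow> ('w \<Rightarrow> 'u \<Rightarrow> 'v pmf) \<Rightarrow> nat \<Rightarrow> real \<Rightarrow> 'w list \<Rightarrow> real" where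
  "exp_tv PhiU PhiV n R ws =
     measure_pmf.expectation (codebook_pmf PhiU n R)
       (\<lambda>C. tv_dist n (outP PhiV n R C ws) (outQ PhiU PhiV n ws))"

end

(*
  Fix w^n, write W(v^n|u^n) for the channel likelihood and Q(v^n) for the target product
  distribution, so that Q(v^n) is the mean of W(v^n|U^n) over a random codeword U^n.  Split
  W(v^n|u^n) at the threshold theta Q(v^n).  Below the threshold the output distribution is an
  average of M = 2^{nR} i.i.d. variables bounded by theta Q(v^n), whose expected deviation from
  the mean is at most Q(v^n) sqrt(theta/M) by the second-moment bound; above it, the average
  deviates by at most twice its mean.  Summing over v^n, the expected total variation is at most
  P[W(V^n|U^n) > theta Q(V^n)] + sqrt(theta/M)/2.  Take log theta = n (I + gamma/2): the second
  term becomes 2^{-n gamma/4}, and the first is a large deviation of the information density,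
  a sum of n independent bounded terms with mean n I ln 2, which Hoeffding's lemma and a
  Chernoff bound make at most exp(-c n gamma^2).  Both vanish when gamma_n sqrt n tends to
  infinity, exponentially fast when gamma is constant.
*)
theory Submission
  imports Defs
begin

section \<open>Sums over words\<close>

lemma finite_words [simp]: "finite (words n :: 'a::finite list set)"
  using finite_lists_length_eq[of "UNIV :: 'a set" n] by (simp add: words_def)

lemma words_Suc: "words (Suc n) = (\<lambda>(xs, x). xs @ [x]) ` (words n \<times> UNIV)"
proof (intro equalityI subsetI)
  fix ys :: "'a list"
  assume "ys \<in> words (Suc n)"
  then have len: "length ys = Suc n" by (simp add: words_def)
  then obtain xs x where "ys = xs @ [x]" by (metis length_Suc_conv_rev)
  with len show "ys \<in> (\<lambda>(xs, x). xs @ [x]) ` (words n \<times> UNIV)"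
    by (auto simp: words_def)
qed (auto simp: words_def)

lemma sum_words_prod_nth:
  fixes f :: "nat \<Rightarrow> 'a::finite \<Rightarrow> 'b::comm_semiring_1"
  shows "(\<Sum>xs\<in>words n. \<Prod>t<n. f t (xs ! t)) = (\<Prod>t<n. \<Sum>x\<in>UNIV. f t x)"
proof (induction n)
  case 0
  then show ?case by (simp add: words_def)
next
  case (Suc n)
  have inj: "inj_on (\<lambda>(xs, x). xs @ [x]) (words n \<times> (UNIV :: 'a set))"
    by (auto simp: inj_on_def)
  have snoc: "(\<Prod>t<Suc n. f t ((xs @ [x]) ! t)) = (\<Prod>t<n. f t (xs ! t)) * f n x"
    if "xs \<in> words n" for xs x
  proof -
    have len: "length xs = n" using that by (simp add: words_def)
    have "(\<Prod>t<n. f t ((xs @ [x]) ! t)) = (\<Prod>t<n. f t (xs ! t))"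
      by (intro prod.cong refl) (simp add: nth_append len)
    then show ?thesis by (simp add: len[symmetric])
  qed
  have "(\<Sum>xs\<in>words (Suc n). \<Prod>t<Suc n. f t (xs ! t))
      = (\<Sum>(xs, x)\<in>words n \<times> UNIV. \<Prod>t<Suc n. f t ((xs @ [x]) ! t))"
    unfolding words_Suc by (subst sum.reindex[OF inj]) (simp add: case_prod_unfold)
  also have "\<dots> = (\<Sum>(xs, x)\<in>words n \<times> UNIV. (\<Prod>t<n. f t (xs ! t)) * f n x)"
    by (intro sum.cong refl) (auto simp del: prod.lessThan_Suc simp: snoc)
  also have "\<dots> = (\<Prod>t<Suc n. \<Sum>x\<in>UNIV. f t x)"
    by (simp add: sum.cartesian_product[symmetric] sum_product flip: Suc)
  finally show ?case .
qed

lemma sum_nth_eq_empdist: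
  fixes ws :: "'w::finite list" and f :: "'w \<Rightarrow> real"
  shows "(\<Sum>t<length ws. f (ws ! t)) = real (length ws) * (\<Sum>w\<in>UNIV. empdist ws w * f w)"
proof -
  let ?n = "length ws"
  have occurrences: "(\<Sum>t<?n. if ws ! t = w then f w else 0)
      = real (card {t. t < ?n \<and> ws ! t = w}) * f w" for w
  proof -
    have "{..<?n} \<inter> {t. ws ! t = w} = {t. t < ?n \<and> ws ! t = w}" by auto
    then show ?thesis by (simp add: sum.If_cases)
  qed
  have "(\<Sum>t<?n. f (ws ! t)) = (\<Sum>t<?n. \<Sum>w\<in>UNIV. if ws ! t = w then f w else 0)"
    by simp
  also have "\<dots> = (\<Sum>w\<in>UNIV. real (card {t. t < ?n \<and> ws ! t = w}) * f w)"
    by (subst sum.swap) (simp add: occurrences)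
  finally show ?thesis
    by (cases "?n = 0") (simp_all add: empdist_def sum_distrib_left)
qed

section \<open>Empirical means of independent samples\<close>

lemma (in prob_space) expectation_abs_le_sqrt_second_moment:
  fixes X :: "'a \<Rightarrow> real"
  assumes "integrable M X" "integrable M (\<lambda>x. (X x)\<^sup>2)"
  shows "expectation (\<lambda>x. \<bar>X x\<bar>) \<le> sqrt (expectation (\<lambda>x. (X x)\<^sup>2))"
proof -
  have "variance (\<lambda>x. \<bar>X x\<bar>) = expectation (\<lambda>x. (X x)\<^sup>2) - (expectation (\<lambda>x. \<bar>X x\<bar>))\<^sup>2"
    using variance_eq[of "\<lambda>x. \<bar>X x\<bar>"] assms by simp
  then have "(expectation (\<lambda>x. \<bar>X x\<bar>))\<^sup>2 \<le> expectation (\<lambda>x. (X x)\<^sup>2)"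
    using variance_positive[of "\<lambda>x. \<bar>X x\<bar>"] by linarith
  then show ?thesis by (rule real_le_rsqrt)
qed

lemma finite_set_Pi_pmf:
  assumes "finite A" "\<And>i. i \<in> A \<Longrightarrow> finite (set_pmf (p i))"
  shows "finite (set_pmf (Pi_pmf A d p))"
  by (rule finite_subset[OF set_Pi_pmf_subset'[OF assms(1)]]) (use assms in auto)

lemma expectation_Pi_pmf_component:
  fixes f :: "'a \<Rightarrow> real"
  assumes "finite A" "i \<in> A"
  shows "measure_pmf.expectation (Pi_pmf A d p) (\<lambda>X. f (X i)) = measure_pmf.expectation (p i) f"
proof -
  have "p i = map_pmf (\<lambda>X. X i) (Pi_pmf A d p)"
    using Pi_pmf_component[OF assms(1), of i d p] assms(2) by simp
  then show ?thesis by simp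
qed

lemma expectation_Pi_pmf_two_components:
  fixes f g :: "'a \<Rightarrow> real"
  assumes "finite A" "i \<in> A" "k \<in> A" "i \<noteq> k"
    and "\<And>j. j \<in> A \<Longrightarrow> finite (set_pmf (p j))"
    and "\<And>x. f x \<ge> 0" "\<And>x. g x \<ge> 0"
  shows "measure_pmf.expectation (Pi_pmf A d p) (\<lambda>X. f (X i) * g (X k))
       = measure_pmf.expectation (p i) f * measure_pmf.expectation (p k) g"
proof -
  define h where "h = (\<lambda>j. if j = i then f else if j = k then g else (\<lambda>_. 1))"
  have two: "(\<Prod>j\<in>A. F j) = F i * F k" if "\<And>j. j \<in> A - {i, k} \<Longrightarrow> F j = 1"
    for F :: "_ \<Rightarrow> real"
    using prod.mono_neutral_right[OF assms(1), of "{i, k}" F] that assms(2-4) by auto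
  have "measure_pmf.expectation (Pi_pmf A d p) (\<lambda>X. \<Prod>j\<in>A. h j (X j))
      = (\<Prod>j\<in>A. measure_pmf.expectation (p j) (h j))"
    by (rule expectation_prod_Pi_pmf)
       (auto simp: h_def assms(1,5-7) intro!: integrable_measure_pmf_finite)
  moreover have "(\<Prod>j\<in>A. h j (X j)) = f (X i) * g (X k)" for X
    using two[of "\<lambda>j. h j (X j)"] assms(4) by (simp add: h_def)
  moreover have "(\<Prod>j\<in>A. measure_pmf.expectation (p j) (h j))
      = measure_pmf.expectation (p i) f * measure_pmf.expectation (p k) g"
    using two[of "\<lambda>j. measure_pmf.expectation (p j) (h j)"] assms(4) by (simp add: h_def)
  ultimately show ?thesis by simp
qed

lemma expectation_Pi_pmf_words:
  fixes p :: "nat \<Rightarrow> 'a::finite pmf" and g :: "'a list \<Rightarrow> real"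
  shows "measure_pmf.expectation (Pi_pmf {..<n} d p) (\<lambda>X. g (map X [0..<n]))
       = (\<Sum>xs\<in>words n. (\<Prod>t<n. pmf (p t) (xs ! t)) * g xs)"
proof -
  let ?S = "PiE_dflt {..<n} d (\<lambda>_. UNIV :: 'a set)"
  have "bij_betw (\<lambda>X. map X [0..<n]) ?S (words n)"
  proof (rule bij_betwI[where g = "\<lambda>xs t. if t < n then xs ! t else d"])
    show "map (\<lambda>t. if t < n then xs ! t else d) [0..<n] = xs" if "xs \<in> words n" for xs
      using that by (auto simp: words_def intro!: nth_equalityI)
  qed (auto simp: words_def PiE_dflt_def)
  then have "(\<Sum>X\<in>?S. (\<Prod>t<n. pmf (p t) (map X [0..<n] ! t)) * g (map X [0..<n]))
      = (\<Sum>xs\<in>words n. (\<Prod>t<n. pmf (p t) (xs ! t)) * g xs)"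
    by (rule sum.reindex_bij_betw)
  moreover have "measure_pmf.expectation (Pi_pmf {..<n} d p) (\<lambda>X. g (map X [0..<n]))
      = (\<Sum>X\<in>?S. g (map X [0..<n]) * pmf (Pi_pmf {..<n} d p) X)"
    by (rule integral_measure_pmf_real[OF finite_PiE_dflt])
       (use set_Pi_pmf_subset'[of "{..<n}" d p] in \<open>auto simp: PiE_dflt_def\<close>)
  moreover have "\<dots> = (\<Sum>X\<in>?S. (\<Prod>t<n. pmf (p t) (map X [0..<n] ! t)) * g (map X [0..<n]))"
    by (intro sum.cong refl) (auto simp: pmf_Pi PiE_dflt_def)
  ultimately show ?thesis by simp
qed

lemma expectation_Pi_pmf_centered_product:
  fixes f :: "'a \<Rightarrow> real"
  assumes A: "finite A" "\<And>i. i \<in> A \<Longrightarrow> finite (set_pmf (p i))"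
    and ij: "i \<in> A" "j \<in> A" "p i = D" "p j = D" and f: "\<And>x. 0 \<le> f x"
  defines "\<mu> \<equiv> measure_pmf.expectation D f"
  shows "measure_pmf.expectation (Pi_pmf A d p) (\<lambda>X. (f (X i) - \<mu>) * (f (X j) - \<mu>))
       = (if i = j then measure_pmf.expectation D (\<lambda>x. (f x)\<^sup>2) - \<mu>\<^sup>2 else 0)"
proof -
  let ?E = "measure_pmf.expectation (Pi_pmf A d p)"
  let ?ED = "measure_pmf.expectation D"
  have [simp]: "integrable (measure_pmf (Pi_pmf A d p)) g" for g :: "_ \<Rightarrow> real"
    by (intro integrable_measure_pmf_finite finite_set_Pi_pmf A)
  have [simp]: "integrable (measure_pmf D) g" for g :: "_ \<Rightarrow> real"
    using A(2) ij(1,3) by (intro integrable_measure_pmf_finite) auto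
  have comp: "?E (\<lambda>X. g (X k)) = ?ED g" if "k \<in> {i, j}" for g :: "_ \<Rightarrow> real" and k
    using expectation_Pi_pmf_component[OF A(1), of k d p g] ij that by auto
  show ?thesis
  proof (cases "i = j")
    case True
    have "?E (\<lambda>X. (f (X i) - \<mu>) * (f (X i) - \<mu>)) = ?ED (\<lambda>x. (f x)\<^sup>2 - 2 * \<mu> * f x + \<mu>\<^sup>2)"
      using comp[of i "\<lambda>x. (f x)\<^sup>2 - 2 * \<mu> * f x + \<mu>\<^sup>2"]
      by (simp add: power2_eq_square algebra_simps)
    also have "\<dots> = ?ED (\<lambda>x. (f x)\<^sup>2) - \<mu>\<^sup>2"
      by (simp add: \<mu>_def power2_eq_square)
    finally show ?thesis using True by simp
  next
    case False
    have "?E (\<lambda>X. f (X i) * f (X j)) = \<mu> * \<mu>"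
      using expectation_Pi_pmf_two_components[OF A(1) ij(1,2) False, of p f f d] A(2) ij(3,4) f
      by (simp add: \<mu>_def)
    moreover have "?E (\<lambda>X. (f (X i) - \<mu>) * (f (X j) - \<mu>))
        = ?E (\<lambda>X. f (X i) * f (X j)) - \<mu> * ?E (\<lambda>X. f (X i)) - \<mu> * ?E (\<lambda>X. f (X j)) + \<mu> * \<mu>"
      by (simp add: algebra_simps)
    ultimately show ?thesis using False comp by (simp add: \<mu>_def)
  qed
qed

lemma Pi_pmf_empirical_mean_second_moment:
  fixes p :: "'i \<Rightarrow> 'a pmf" and \<iota> :: "'k \<Rightarrow> 'i" and f :: "'a \<Rightarrow> real"
  assumes A: "finite A" "\<And>i. i \<in> A \<Longrightarrow> finite (set_pmf (p i))"
    and K: "finite K" "K \<noteq> {}" "inj_on \<iota> K" "\<iota> ` K \<subseteq> A" "\<And>k. k \<in> K \<Longrightarrow> p (\<iota> k) = D"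
    and f: "\<And>x. 0 \<le> f x"
  defines "\<mu> \<equiv> measure_pmf.expectation D f" and "N \<equiv> real (card K)"
  shows "measure_pmf.expectation (Pi_pmf A d p) (\<lambda>X. ((\<Sum>k\<in>K. f (X (\<iota> k))) / N - \<mu>)\<^sup>2)
       = (measure_pmf.expectation D (\<lambda>x. (f x)\<^sup>2) - \<mu>\<^sup>2) / N"
proof -
  let ?E = "measure_pmf.expectation (Pi_pmf A d p)"
  let ?c = "\<lambda>X k. f (X (\<iota> k)) - \<mu>"
  have N: "N > 0" using K(1,2) by (simp add: N_def card_gt_0_iff)
  have [simp]: "integrable (measure_pmf (Pi_pmf A d p)) g" for g :: "_ \<Rightarrow> real"
    by (intro integrable_measure_pmf_finite finite_set_Pi_pmf A)
  have "(\<Sum>k\<in>K. f (X (\<iota> k))) / N - \<mu> = (\<Sum>k\<in>K. ?c X k) / N" for X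
    using N by (simp add: N_def sum_subtractf field_simps)
  then have "?E (\<lambda>X. ((\<Sum>k\<in>K. f (X (\<iota> k))) / N - \<mu>)\<^sup>2)
      = (\<Sum>k\<in>K. \<Sum>l\<in>K. ?E (\<lambda>X. ?c X k * ?c X l)) / N\<^sup>2"
    by (simp add: power_divide power2_eq_square sum_product Bochner_Integration.integral_sum)
  also have "\<dots> = (\<Sum>k\<in>K. measure_pmf.expectation D (\<lambda>x. (f x)\<^sup>2) - \<mu>\<^sup>2) / N\<^sup>2"
  proof -
    have "?E (\<lambda>X. ?c X k * ?c X l)
        = (if k = l then measure_pmf.expectation D (\<lambda>x. (f x)\<^sup>2) - \<mu>\<^sup>2 else 0)"
      if "k \<in> K" "l \<in> K" for k l
      using expectation_Pi_pmf_centered_product[where A = A and p = p and i = "\<iota> k"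
          and j = "\<iota> l" and D = D and f = f and d = d] A K that f
      by (auto simp: \<mu>_def inj_on_eq_iff image_subset_iff)
    then show ?thesis
      using K(1) by (simp add: sum.delta cong: sum.cong)
  qed
  also have "\<dots> = (measure_pmf.expectation D (\<lambda>x. (f x)\<^sup>2) - \<mu>\<^sup>2) / N"
    using N by (simp add: N_def power2_eq_square)
  finally show ?thesis .
qed

lemma Pi_pmf_empirical_mean_deviation:
  fixes p :: "'i \<Rightarrow> 'a pmf" and \<iota> :: "'k \<Rightarrow> 'i" and f :: "'a \<Rightarrow> real"
  assumes A: "finite A" "\<And>i. i \<in> A \<Longrightarrow> finite (set_pmf (p i))"
    and K: "finite K" "K \<noteq> {}" "inj_on \<iota> K" "\<iota> ` K \<subseteq> A" "\<And>k. k \<in> K \<Longrightarrow> p (\<iota> k) = D"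
    and f: "\<And>x. 0 \<le> f x" "\<And>x. f x \<le> c"
  shows "measure_pmf.expectation (Pi_pmf A d p)
           (\<lambda>X. \<bar>(\<Sum>k\<in>K. f (X (\<iota> k))) / card K - measure_pmf.expectation D f\<bar>)
         \<le> sqrt (c * measure_pmf.expectation D f / card K)"
proof -
  let ?ED = "measure_pmf.expectation D"
  let ?Y = "\<lambda>X. (\<Sum>k\<in>K. f (X (\<iota> k))) / card K - ?ED f"
  obtain k where "k \<in> K" using K(2) by blast
  then have [simp]: "integrable (measure_pmf D) g" for g :: "_ \<Rightarrow> real"
    using A(2) K(4,5) by (intro integrable_measure_pmf_finite) force
  have "?ED (\<lambda>x. (f x)\<^sup>2) \<le> ?ED (\<lambda>x. c * f x)"
    using f by (intro integral_mono) (auto simp: power2_eq_square mult_right_mono)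
  then have "?ED (\<lambda>x. (f x)\<^sup>2) - (?ED f)\<^sup>2 \<le> c * ?ED f"
    using zero_le_power2[of "?ED f"] by (simp only: integral_mult_right_zero)
  then have "measure_pmf.expectation (Pi_pmf A d p) (\<lambda>X. (?Y X)\<^sup>2) \<le> c * ?ED f / card K"
    using Pi_pmf_empirical_mean_second_moment[where A = A and K = K and \<iota> = \<iota> and D = D and d = d]
      A K f by (simp add: divide_right_mono)
  then have "sqrt (measure_pmf.expectation (Pi_pmf A d p) (\<lambda>X. (?Y X)\<^sup>2))
      \<le> sqrt (c * ?ED f / card K)"
    by (rule real_sqrt_le_mono)
  moreover have "measure_pmf.expectation (Pi_pmf A d p) (\<lambda>X. \<bar>?Y X\<bar>)
      \<le> sqrt (measure_pmf.expectation (Pi_pmf A d p) (\<lambda>X. (?Y X)\<^sup>2))"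
    using A by (intro measure_pmf.expectation_abs_le_sqrt_second_moment
        integrable_measure_pmf_finite finite_set_Pi_pmf)
  ultimately show ?thesis by linarith
qed

section \<open>Random codebooks\<close>

definition input_prob :: "('w \<Rightarrow> 'u pmf) \<Rightarrow> 'w list \<Rightarrow> 'u list \<Rightarrow> real" where
  "input_prob PhiU ws us = (\<Prod>t<length ws. pmf (PhiU (ws ! t)) (us ! t))"

definition channel_prob :: "('w \<Rightarrow> 'u \<Rightarrow> 'v pmf) \<Rightarrow> 'w list \<Rightarrow> 'u list \<Rightarrow> 'v list \<Rightarrow> real" where
  "channel_prob PhiV ws us vs = (\<Prod>t<length ws. pmf (PhiV (ws ! t) (us ! t)) (vs ! t))"

lemma input_prob_nonneg: "input_prob PhiU ws us \<ge> 0"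
  by (simp add: input_prob_def prod_nonneg)

lemma channel_prob_nonneg: "channel_prob PhiV ws us vs \<ge> 0"
  by (simp add: channel_prob_def prod_nonneg)

lemma outQ_nonneg: "outQ PhiU PhiV n ws vs \<ge> 0"
  by (simp add: outQ_def prod_nonneg)

lemma pmf_chanVW:
  fixes PhiU :: "'w \<Rightarrow> 'u::finite pmf"
  shows "pmf (chanVW PhiU PhiV w) v = (\<Sum>u\<in>UNIV. pmf (PhiU w) u * pmf (PhiV w u) v)"
  by (simp add: chanVW_def pmf_bind integral_measure_pmf_real[of UNIV] mult.commute)

lemma pmf_chanVW_pos:
  fixes PhiU :: "'w \<Rightarrow> 'u::finite pmf"
  assumes "pmf (PhiU w) u * pmf (PhiV w u) v > 0"
  shows "pmf (chanVW PhiU PhiV w) v > 0"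
proof -
  have "pmf (PhiU w) u * pmf (PhiV w u) v \<le> (\<Sum>u\<in>UNIV. pmf (PhiU w) u * pmf (PhiV w u) v)"
    by (rule member_le_sum) auto
  then show ?thesis using assms by (simp add: pmf_chanVW)
qed

lemma sum_outQ:
  fixes PhiU :: "'w \<Rightarrow> 'u::finite pmf" and PhiV :: "'w \<Rightarrow> 'u \<Rightarrow> 'v::finite pmf"
  shows "(\<Sum>vs\<in>words n. outQ PhiU PhiV n ws vs) = 1"
  unfolding outQ_def by (subst sum_words_prod_nth) (simp add: sum_pmf_eq_1)

lemma outQ_eq_sum_input_channel_prob:
  fixes PhiU :: "'w \<Rightarrow> 'u::finite pmf"
  shows "outQ PhiU PhiV (length ws) ws vs
       = (\<Sum>us\<in>words (length ws). input_prob PhiU ws us * channel_prob PhiV ws us vs)"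
proof -
  have "(\<Sum>us\<in>words (length ws). input_prob PhiU ws us * channel_prob PhiV ws us vs)
      = (\<Sum>us\<in>words (length ws). \<Prod>t<length ws.
           pmf (PhiU (ws ! t)) (us ! t) * pmf (PhiV (ws ! t) (us ! t)) (vs ! t))"
    by (simp add: input_prob_def channel_prob_def prod.distrib)
  also have "\<dots> = outQ PhiU PhiV (length ws) ws vs"
    by (subst sum_words_prod_nth) (simp add: outQ_def pmf_chanVW)
  finally show ?thesis ..
qed

lemma cbsize_ge: "real (cbsize n R) \<ge> 2 powr (real n * R)"
proof -
  have "2 powr (real n * R) \<le> of_int \<lceil>2 powr (real n * R)\<rceil>"
    by (rule le_of_int_ceiling)
  also have "\<dots> = real (cbsize n R)"
    using ceiling_mono[of 0 "2 powr (real n * R)"] by (simp add: cbsize_def)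
  finally show ?thesis .
qed

lemma cbsize_pos: "cbsize n R > 0"
  using cbsize_ge[of n R] by (smt (verit) of_nat_0_less_iff powr_gt_zero)

lemma outP_eq_average:
  "outP PhiV (length ws) R C ws vs
     = (\<Sum>j<cbsize (length ws) R. channel_prob PhiV ws (map (C (ws, j)) [0..<length ws]) vs)
       / cbsize (length ws) R"
  by (simp add: outP_def channel_prob_def)

lemma finite_set_codebook_pmf:
  fixes PhiU :: "'w::finite \<Rightarrow> 'u::finite pmf"
  shows "finite (set_pmf (codebook_pmf PhiU n R))"
  unfolding codebook_pmf_def by (auto intro!: finite_set_Pi_pmf)

lemma integrable_codebook_pmf [simp]:
  fixes PhiU :: "'w::finite \<Rightarrow> 'u::finite pmf" and f :: "_ \<Rightarrow> real"
  shows "integrable (measure_pmf (codebook_pmf PhiU n R)) f"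
  by (intro integrable_measure_pmf_finite finite_set_codebook_pmf)

lemma expectation_codebook_entry:
  fixes PhiU :: "'w::finite \<Rightarrow> 'u::finite pmf" and g :: "'u list \<Rightarrow> real"
  assumes "ws \<in> words n" "j < cbsize n R"
  shows "measure_pmf.expectation (codebook_pmf PhiU n R) (\<lambda>C. g (map (C (ws, j)) [0..<n]))
       = (\<Sum>us\<in>words n. input_prob PhiU ws us * g us)"
proof -
  have "(ws, j) \<in> words n \<times> {..<cbsize n R}" using assms by simp
  then have "measure_pmf.expectation (codebook_pmf PhiU n R) (\<lambda>C. g (map (C (ws, j)) [0..<n]))
      = measure_pmf.expectation (Pi_pmf {..<n} undefined (\<lambda>t. PhiU (ws ! t)))
          (\<lambda>X. g (map X [0..<n]))"
    unfolding codebook_pmf_def by (subst expectation_Pi_pmf_component) auto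
  then show ?thesis
    using assms(1) by (simp add: expectation_Pi_pmf_words input_prob_def words_def)
qed

lemma expectation_codebook_average:
  fixes PhiU :: "'w::finite \<Rightarrow> 'u::finite pmf" and g :: "'u list \<Rightarrow> real"
  assumes "ws \<in> words n"
  shows "measure_pmf.expectation (codebook_pmf PhiU n R)
           (\<lambda>C. (\<Sum>j<cbsize n R. g (map (C (ws, j)) [0..<n])) / cbsize n R)
       = (\<Sum>us\<in>words n. input_prob PhiU ws us * g us)"
  using assms cbsize_pos[of n R]
  by (simp add: Bochner_Integration.integral_sum expectation_codebook_entry)

lemma codebook_empirical_mean_deviation:
  fixes PhiU :: "'w::finite \<Rightarrow> 'u::finite pmf" and g :: "'u list \<Rightarrow> real"
  assumes "ws \<in> words n" "\<And>us. 0 \<le> g us" "\<And>us. g us \<le> c"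
  defines "\<mu> \<equiv> (\<Sum>us\<in>words n. input_prob PhiU ws us * g us)"
  shows "measure_pmf.expectation (codebook_pmf PhiU n R)
           (\<lambda>C. \<bar>(\<Sum>j<cbsize n R. g (map (C (ws, j)) [0..<n])) / cbsize n R - \<mu>\<bar>)
         \<le> sqrt (c * \<mu> / cbsize n R)"
proof -
  define D where "D = Pi_pmf {..<n} undefined (\<lambda>t. PhiU (ws ! t))"
  have "\<mu> = measure_pmf.expectation D (\<lambda>X. g (map X [0..<n]))"
    using assms(1) by (simp add: \<mu>_def D_def expectation_Pi_pmf_words input_prob_def words_def)
  moreover have "measure_pmf.expectation (codebook_pmf PhiU n R)
      (\<lambda>C. \<bar>(\<Sum>j<cbsize n R. g (map (C (ws, j)) [0..<n])) / card {..<cbsize n R}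
             - measure_pmf.expectation D (\<lambda>X. g (map X [0..<n]))\<bar>)
    \<le> sqrt (c * measure_pmf.expectation D (\<lambda>X. g (map X [0..<n])) / card {..<cbsize n R})"
    unfolding codebook_pmf_def
    by (rule Pi_pmf_empirical_mean_deviation)
       (use assms(1-3) cbsize_pos[of n R]
         in \<open>auto simp: D_def inj_on_def intro!: finite_set_Pi_pmf\<close>)
  ultimately show ?thesis by simp
qed

lemma codebook_average_deviation_truncated:
  fixes PhiU :: "'w::finite \<Rightarrow> 'u::finite pmf" and g :: "'u list \<Rightarrow> real" and R T :: real
  assumes ws: "ws \<in> words n" and g: "\<And>us. 0 \<le> g us" and "T \<ge> 0"
  defines "\<mu> \<equiv> (\<Sum>us\<in>words n. input_prob PhiU ws us * g us)" and "M \<equiv> cbsize n R"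
  shows "measure_pmf.expectation (codebook_pmf PhiU n R)
           (\<lambda>C. \<bar>(\<Sum>j<M. g (map (C (ws, j)) [0..<n])) / M - \<mu>\<bar>)
         \<le> sqrt (T * \<mu> / M)
           + 2 * (\<Sum>us\<in>words n. if g us > T then input_prob PhiU ws us * g us else 0)"
proof -
  let ?E = "measure_pmf.expectation (codebook_pmf PhiU n R)"
  define a where "a = (\<lambda>us. if g us > T then 0 else g us)"
  define b where "b = (\<lambda>us. if g us > T then g us else 0)"
  define \<mu>\<^sub>a where "\<mu>\<^sub>a = (\<Sum>us\<in>words n. input_prob PhiU ws us * a us)"
  define \<beta> where "\<beta> = (\<Sum>us\<in>words n. input_prob PhiU ws us * b us)"
  define avg where "avg = (\<lambda>(h :: 'u list \<Rightarrow> real) (C :: 'w list \<times> nat \<Rightarrow> nat \<Rightarrow> 'u).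
    (\<Sum>j<M. h (map (C (ws, j)) [0..<n])) / M)"
  have ab: "a us + b us = g us" for us
    by (simp add: a_def b_def)
  have a_nonneg: "0 \<le> a us" and b_nonneg: "0 \<le> b us" for us
    by (simp_all add: a_def b_def g)
  have \<beta>_nonneg: "0 \<le> \<beta>" and \<mu>_split: "\<mu> = \<mu>\<^sub>a + \<beta>"
    by (simp_all add: \<beta>_def \<mu>\<^sub>a_def \<mu>_def sum_nonneg input_prob_nonneg b_nonneg
        flip: ab sum.distrib distrib_left)
  have split: "\<bar>avg g C - \<mu>\<bar> \<le> \<bar>avg a C - \<mu>\<^sub>a\<bar> + avg b C + \<beta>" for C
  proof -
    have "avg g C = avg a C + avg b C"
      by (simp add: avg_def flip: ab sum.distrib add_divide_distrib)
    moreover have "0 \<le> avg b C"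
      by (simp add: avg_def sum_nonneg b_nonneg)
    ultimately show ?thesis using \<mu>_split \<beta>_nonneg by linarith
  qed
  have "?E (\<lambda>C. \<bar>avg a C - \<mu>\<^sub>a\<bar>) \<le> sqrt (T * \<mu>\<^sub>a / M)"
    unfolding avg_def \<mu>\<^sub>a_def M_def
    by (rule codebook_empirical_mean_deviation) (use ws a_nonneg \<open>T \<ge> 0\<close> in \<open>auto simp: a_def\<close>)
  also have "\<dots> \<le> sqrt (T * \<mu> / M)"
    using \<mu>_split \<beta>_nonneg \<open>T \<ge> 0\<close> by (auto intro!: divide_right_mono mult_left_mono)
  finally have Ea: "?E (\<lambda>C. \<bar>avg a C - \<mu>\<^sub>a\<bar>) \<le> sqrt (T * \<mu> / M)" .
  have Eb: "?E (avg b) = \<beta>"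
    unfolding avg_def \<beta>_def M_def using ws by (rule expectation_codebook_average)
  have \<beta>_eq: "\<beta> = (\<Sum>us\<in>words n. if g us > T then input_prob PhiU ws us * g us else 0)"
    unfolding \<beta>_def b_def by (intro sum.cong) auto
  have "?E (\<lambda>C. \<bar>avg g C - \<mu>\<bar>) \<le> ?E (\<lambda>C. \<bar>avg a C - \<mu>\<^sub>a\<bar> + avg b C + \<beta>)"
    by (intro integral_mono split) simp_all
  also have "\<dots> = ?E (\<lambda>C. \<bar>avg a C - \<mu>\<^sub>a\<bar>) + ?E (avg b) + \<beta>"
    by simp
  also have "\<dots> \<le> sqrt (T * \<mu> / M) + 2 * \<beta>"
    using Ea Eb by simp
  finally show ?thesis
    by (simp add: avg_def \<beta>_eq)
qed

definition atypical_mass :: "('w \<Rightarrow> 'u pmf) \<Rightarrow> ('w \<Rightarrow> 'u \<Rightarrow> 'v pmf) \<Rightarrow> 'w list \<Rightarrow> real \<Rightarrow> real" where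
  "atypical_mass PhiU PhiV ws \<theta> =
     (\<Sum>vs\<in>words (length ws). \<Sum>us\<in>words (length ws).
        if channel_prob PhiV ws us vs > \<theta> * outQ PhiU PhiV (length ws) ws vs
        then input_prob PhiU ws us * channel_prob PhiV ws us vs else 0)"

lemma expectation_abs_outP_minus_outQ:
  fixes PhiU :: "'w::finite \<Rightarrow> 'u::finite pmf" and PhiV :: "'w \<Rightarrow> 'u \<Rightarrow> 'v::finite pmf"
    and ws :: "'w list" and vs :: "'v list" and R \<theta> :: real
  assumes "\<theta> \<ge> 0"
  defines "n \<equiv> length ws" and "Q \<equiv> outQ PhiU PhiV (length ws) ws vs"
  shows "measure_pmf.expectation (codebook_pmf PhiU n R) (\<lambda>C. \<bar>outP PhiV n R C ws vs - Q\<bar>)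
       \<le> Q * sqrt (\<theta> / cbsize n R) + 2 * (\<Sum>us\<in>words n.
            if channel_prob PhiV ws us vs > \<theta> * Q
            then input_prob PhiU ws us * channel_prob PhiV ws us vs else 0)"
proof -
  let ?PV = "\<lambda>us. channel_prob PhiV ws us vs"
  have "Q \<ge> 0" by (simp add: Q_def outQ_nonneg)
  have Q_eq: "(\<Sum>us\<in>words n. input_prob PhiU ws us * ?PV us) = Q"
    by (simp add: n_def Q_def outQ_eq_sum_input_channel_prob)
  have "measure_pmf.expectation (codebook_pmf PhiU n R)
      (\<lambda>C. \<bar>(\<Sum>j<cbsize n R. ?PV (map (C (ws, j)) [0..<n])) / cbsize n R
             - (\<Sum>us\<in>words n. input_prob PhiU ws us * ?PV us)\<bar>)
    \<le> sqrt (\<theta> * Q * (\<Sum>us\<in>words n. input_prob PhiU ws us * ?PV us) / cbsize n R)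
      + 2 * (\<Sum>us\<in>words n. if ?PV us > \<theta> * Q then input_prob PhiU ws us * ?PV us else 0)"
    by (rule codebook_average_deviation_truncated)
       (use assms(1) \<open>Q \<ge> 0\<close> in \<open>simp_all add: n_def words_def channel_prob_nonneg\<close>)
  also have "sqrt (\<theta> * Q * (\<Sum>us\<in>words n. input_prob PhiU ws us * ?PV us) / cbsize n R)
      = Q * sqrt (\<theta> / cbsize n R)"
    using \<open>Q \<ge> 0\<close> by (simp add: Q_eq real_sqrt_mult real_sqrt_divide)
  finally show ?thesis
    by (simp only: n_def outP_eq_average Q_eq[unfolded n_def])
qed

lemma exp_tv_le_atypical_mass:
  fixes PhiU :: "'w::finite \<Rightarrow> 'u::finite pmf" and PhiV :: "'w \<Rightarrow> 'u \<Rightarrow> 'v::finite pmf"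
  assumes "\<theta> \<ge> 0"
  shows "exp_tv PhiU PhiV (length ws) R ws
       \<le> atypical_mass PhiU PhiV ws \<theta> + sqrt (\<theta> / cbsize (length ws) R) / 2"
proof -
  let ?n = "length ws"
  let ?Q = "outQ PhiU PhiV ?n ws"
  let ?s = "sqrt (\<theta> / cbsize ?n R)"
  have "exp_tv PhiU PhiV ?n R ws = (\<Sum>vs\<in>words ?n.
      measure_pmf.expectation (codebook_pmf PhiU ?n R) (\<lambda>C. \<bar>outP PhiV ?n R C ws vs - ?Q vs\<bar>)) / 2"
    by (simp add: exp_tv_def tv_dist_def Bochner_Integration.integral_sum)
  also have "\<dots> \<le> (\<Sum>vs\<in>words ?n. ?Q vs * ?s + 2 * (\<Sum>us\<in>words ?n.
      if channel_prob PhiV ws us vs > \<theta> * ?Q vs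
      then input_prob PhiU ws us * channel_prob PhiV ws us vs else 0)) / 2"
    by (intro divide_right_mono sum_mono expectation_abs_outP_minus_outQ assms) simp
  also have "\<dots> = atypical_mass PhiU PhiV ws \<theta> + ?s / 2"
    by (simp add: atypical_mass_def sum.distrib sum_outQ flip: sum_distrib_left sum_distrib_right)
  finally show ?thesis .
qed

lemma exp_tv_le_1:
  fixes PhiU :: "'w::finite \<Rightarrow> 'u::finite pmf" and PhiV :: "'w \<Rightarrow> 'u \<Rightarrow> 'v::finite pmf"
  shows "exp_tv PhiU PhiV (length ws) R ws \<le> 1"
proof -
  have "atypical_mass PhiU PhiV ws 0 \<le> (\<Sum>vs\<in>words (length ws). outQ PhiU PhiV (length ws) ws vs)"
    unfolding atypical_mass_def outQ_eq_sum_input_channel_prob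
    by (intro sum_mono) (simp add: input_prob_nonneg channel_prob_nonneg)
  then show ?thesis
    using exp_tv_le_atypical_mass[of 0 PhiU PhiV ws R] by (simp add: sum_outQ)
qed

section \<open>Large deviations of the information density\<close>

lemma measure_pmf_Hoeffdings_lemma:
  fixes p :: "'a pmf" and f :: "'a \<Rightarrow> real"
  assumes range: "\<And>x. x \<in> set_pmf p \<Longrightarrow> f x \<in> {a..b}" and "l \<ge> 0"
  shows "measure_pmf.expectation p (\<lambda>x. exp (l * f x))
       \<le> exp (l * measure_pmf.expectation p f + l\<^sup>2 * (b - a)\<^sup>2 / 8)"
proof (cases "l = 0")
  case False
  interpret interval_bounded_random_variable "measure_pmf p" f a b
  proof
    show "AE x in measure_pmf p. f x \<in> {a..b}"
      using range by (simp add: AE_measure_pmf_iff)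
  qed simp
  let ?\<mu> = "measure_pmf.expectation p f"
  have integrable: "integrable (measure_pmf p) (\<lambda>x. exp (l * (f x - ?\<mu>)))"
  proof (rule measure_pmf.integrable_const_bound[where B = "exp (l * (b - ?\<mu>))"])
    show "AE x in measure_pmf p. norm (exp (l * (f x - ?\<mu>))) \<le> exp (l * (b - ?\<mu>))"
      using range assms(2) by (auto simp: AE_measure_pmf_iff intro!: mult_left_mono)
  qed simp
  have "ennreal (measure_pmf.expectation p (\<lambda>x. exp (l * (f x - ?\<mu>))))
      = (\<integral>\<^sup>+x. ennreal (exp (l * (f x - ?\<mu>))) \<partial>measure_pmf p)"
    by (rule nn_integral_eq_integral[symmetric, OF integrable]) simp
  also have "\<dots> \<le> ennreal (exp (l\<^sup>2 * (b - a)\<^sup>2 / 8))"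
    using Hoeffdings_lemma_nn_integral[of l] False assms(2) by simp
  finally have centered: "measure_pmf.expectation p (\<lambda>x. exp (l * (f x - ?\<mu>)))
      \<le> exp (l\<^sup>2 * (b - a)\<^sup>2 / 8)"
    by (subst (asm) ennreal_le_iff) simp_all
  have "measure_pmf.expectation p (\<lambda>x. exp (l * f x))
      = exp (l * ?\<mu>) * measure_pmf.expectation p (\<lambda>x. exp (l * (f x - ?\<mu>)))"
    by (simp add: right_diff_distrib exp_diff)
  also have "\<dots> \<le> exp (l * ?\<mu>) * exp (l\<^sup>2 * (b - a)\<^sup>2 / 8)"
    using centered by (rule mult_left_mono) simp
  finally show ?thesis
    by (simp add: exp_add)
qed simp

(* In nats.  Only its values on the support of joint_pmf matter; elsewhere it involves the
   junk value ln 0 = 0. *)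
definition info_density :: "('w \<Rightarrow> 'u pmf) \<Rightarrow> ('w \<Rightarrow> 'u \<Rightarrow> 'v pmf) \<Rightarrow> 'w \<Rightarrow> 'u \<Rightarrow> 'v \<Rightarrow> real" where
  "info_density PhiU PhiV w u v = ln (pmf (PhiV w u) v) - ln (pmf (chanVW PhiU PhiV w) v)"

definition joint_pmf :: "('w \<Rightarrow> 'u pmf) \<Rightarrow> ('w \<Rightarrow> 'u \<Rightarrow> 'v pmf) \<Rightarrow> 'w \<Rightarrow> ('u \<times> 'v) pmf" where
  "joint_pmf PhiU PhiV w = bind_pmf (PhiU w) (\<lambda>u. map_pmf (Pair u) (PhiV w u))"

lemma pmf_joint_pmf:
  fixes PhiU :: "'w \<Rightarrow> 'u::finite pmf"
  shows "pmf (joint_pmf PhiU PhiV w) (u, v) = pmf (PhiU w) u * pmf (PhiV w u) v"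
proof -
  have Pair: "pmf (map_pmf (Pair x) (PhiV w x)) (u, v) = (if x = u then pmf (PhiV w u) v else 0)"
    for x
    by (auto simp: pmf_map vimage_def measure_pmf_single)
  have "pmf (joint_pmf PhiU PhiV w) (u, v)
      = (\<Sum>x\<in>UNIV. pmf (PhiU w) x * pmf (map_pmf (Pair x) (PhiV w x)) (u, v))"
    by (simp add: joint_pmf_def pmf_bind integral_measure_pmf_real[of UNIV] mult.commute)
  also have "\<dots> = (\<Sum>x\<in>UNIV. if x = u then pmf (PhiU w) u * pmf (PhiV w u) v else 0)"
    by (intro sum.cong refl) (simp add: Pair)
  finally show ?thesis by simp
qed

lemma expectation_joint_pmf:
  fixes PhiU :: "'w \<Rightarrow> 'u::finite pmf" and PhiV :: "'w \<Rightarrow> 'u \<Rightarrow> 'v::finite pmf"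
    and g :: "'u \<times> 'v \<Rightarrow> real"
  shows "measure_pmf.expectation (joint_pmf PhiU PhiV w) g
       = (\<Sum>u\<in>UNIV. \<Sum>v\<in>UNIV. pmf (PhiU w) u * pmf (PhiV w u) v * g (u, v))"
proof -
  have "measure_pmf.expectation (joint_pmf PhiU PhiV w) g
      = (\<Sum>z\<in>UNIV \<times> UNIV. g z * pmf (joint_pmf PhiU PhiV w) z)"
    by (simp add: integral_measure_pmf_real[of UNIV])
  also have "\<dots> = (\<Sum>u\<in>UNIV. \<Sum>v\<in>UNIV. g (u, v) * pmf (joint_pmf PhiU PhiV w) (u, v))"
    by (simp add: sum.cartesian_product case_prod_unfold)
  finally show ?thesis by (simp add: pmf_joint_pmf ac_simps)
qed

lemma condMI_eq_expectation_info_density: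
  fixes PhiU :: "'w::finite \<Rightarrow> 'u::finite pmf" and PhiV :: "'w \<Rightarrow> 'u \<Rightarrow> 'v::finite pmf"
  shows "ln 2 * condMI P PhiU PhiV = (\<Sum>w\<in>UNIV. P w *
           measure_pmf.expectation (joint_pmf PhiU PhiV w) (\<lambda>(u, v). info_density PhiU PhiV w u v))"
proof -
  have summand: "ln 2 * (if P w * pmf (PhiU w) u * pmf (PhiV w u) v = 0 then 0
        else P w * pmf (PhiU w) u * pmf (PhiV w u) v
             * log 2 (pmf (PhiV w u) v / pmf (chanVW PhiU PhiV w) v))
      = P w * (pmf (PhiU w) u * pmf (PhiV w u) v * info_density PhiU PhiV w u v)" for w u v
  proof (cases "P w * pmf (PhiU w) u * pmf (PhiV w u) v = 0")
    case False
    then have pos: "pmf (PhiU w) u * pmf (PhiV w u) v > 0"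
      by (simp add: less_le)
    then have "pmf (chanVW PhiU PhiV w) v > 0"
      by (rule pmf_chanVW_pos)
    moreover have "pmf (PhiV w u) v > 0"
      using pos by (simp add: zero_less_mult_iff)
    ultimately show ?thesis
      using False by (simp add: log_def ln_div info_density_def)
  qed auto
  show ?thesis
    unfolding condMI_def Let_def expectation_joint_pmf sum_distrib_left
    by (intro sum.cong refl) (simp only: summand prod.case)
qed

(* Inserting 1 keeps the bound positive, so that it can appear in a denominator. *)
definition info_bound :: "('w::finite \<Rightarrow> 'u::finite pmf) \<Rightarrow> ('w \<Rightarrow> 'u \<Rightarrow> 'v::finite pmf) \<Rightarrow> real" where
  "info_bound PhiU PhiV = Max (insert 1 (range (\<lambda>(w, u, v). \<bar>info_density PhiU PhiV w u v\<bar>)))"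

lemma info_bound_ge_1: "info_bound PhiU PhiV \<ge> 1"
  by (simp add: info_bound_def)

lemma abs_info_density_le: "\<bar>info_density PhiU PhiV w u v\<bar> \<le> info_bound PhiU PhiV"
  unfolding info_bound_def by (rule Max_ge) (auto intro: rev_image_eqI[of "(w, u, v)"])

lemma prod_tilted_joint_weights:
  fixes PhiU :: "'w \<Rightarrow> 'u::finite pmf"
  assumes pos: "\<And>t. t < length ws
      \<Longrightarrow> 0 < pmf (PhiU (ws ! t)) (us ! t) * pmf (PhiV (ws ! t) (us ! t)) (vs ! t)"
  shows "(\<Prod>t<length ws. pmf (PhiU (ws ! t)) (us ! t) * pmf (PhiV (ws ! t) (us ! t)) (vs ! t)
             * exp (l * info_density PhiU PhiV (ws ! t) (us ! t) (vs ! t)))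
       = input_prob PhiU ws us * channel_prob PhiV ws us vs
         * exp (l * (ln (channel_prob PhiV ws us vs) - ln (outQ PhiU PhiV (length ws) ws vs)))"
proof -
  let ?n = "length ws"
  let ?dens = "\<lambda>t. info_density PhiU PhiV (ws ! t) (us ! t) (vs ! t)"
  have pV: "0 < pmf (PhiV (ws ! t) (us ! t)) (vs ! t)"
    and ch: "0 < pmf (chanVW PhiU PhiV (ws ! t)) (vs ! t)" if "t < ?n" for t
    using pos[OF that] pmf_chanVW_pos[of PhiU "ws ! t" "us ! t" PhiV "vs ! t"]
    by (simp_all add: zero_less_mult_iff)
  have "ln (channel_prob PhiV ws us vs) = (\<Sum>t<?n. ln (pmf (PhiV (ws ! t) (us ! t)) (vs ! t)))"
    unfolding channel_prob_def using pV by (subst ln_prod) force+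
  moreover have "ln (outQ PhiU PhiV ?n ws vs)
      = (\<Sum>t<?n. ln (pmf (chanVW PhiU PhiV (ws ! t)) (vs ! t)))"
    unfolding outQ_def using ch by (subst ln_prod) force+
  ultimately have "ln (channel_prob PhiV ws us vs) - ln (outQ PhiU PhiV ?n ws vs)
      = (\<Sum>t<?n. ?dens t)"
    by (simp add: info_density_def sum_subtractf)
  then have "exp (l * (ln (channel_prob PhiV ws us vs) - ln (outQ PhiU PhiV ?n ws vs)))
      = (\<Prod>t<?n. exp (l * ?dens t))"
    by (simp add: exp_sum sum_distrib_left)
  then show ?thesis
    by (simp add: input_prob_def channel_prob_def prod.distrib mult_ac)
qed

(* The Chernoff step: on the atypical event, (W/Q)^l exp (- l s) is at least 1. *)
lemma atypical_term_le_tilted: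
  fixes PhiU :: "'w \<Rightarrow> 'u::finite pmf"
  assumes "l \<ge> 0"
  shows "(if channel_prob PhiV ws us vs > exp s * outQ PhiU PhiV (length ws) ws vs
          then input_prob PhiU ws us * channel_prob PhiV ws us vs else 0)
       \<le> exp (- (l * s)) * (\<Prod>t<length ws. pmf (PhiU (ws ! t)) (us ! t)
             * pmf (PhiV (ws ! t) (us ! t)) (vs ! t)
             * exp (l * info_density PhiU PhiV (ws ! t) (us ! t) (vs ! t)))"
    (is "?lhs \<le> exp (- (l * s)) * ?tilted")
proof -
  let ?n = "length ws"
  let ?J = "\<lambda>t. pmf (PhiU (ws ! t)) (us ! t) * pmf (PhiV (ws ! t) (us ! t)) (vs ! t)"
  let ?PU = "input_prob PhiU ws us" and ?PV = "channel_prob PhiV ws us vs"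
  let ?Q = "outQ PhiU PhiV ?n ws vs"
  show ?thesis
  proof (cases "?PV > exp s * ?Q \<and> (\<forall>t<?n. ?J t > 0)")
    case False
    have "(\<Prod>t<?n. ?J t) = ?PU * ?PV"
      by (simp add: input_prob_def channel_prob_def prod.distrib)
    moreover have "(\<Prod>t<?n. ?J t) = 0" if "?PV > exp s * ?Q"
      using False that by (intro prod_zero) (auto simp: less_le)
    ultimately have "?lhs = 0" by auto
    then show ?thesis by (simp add: prod_nonneg)
  next
    case True
    then have "0 < pmf (chanVW PhiU PhiV (ws ! t)) (vs ! t)" if "t < ?n" for t
      using that pmf_chanVW_pos[of PhiU "ws ! t" "us ! t" PhiV "vs ! t"] by simp
    then have "?Q > 0"
      unfolding outQ_def by (auto intro!: prod_pos)
    then have "0 < exp s * ?Q"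
      by simp
    then have "ln (exp s * ?Q) < ln ?PV"
      using True by (intro ln_less_cancel_iff[THEN iffD2]) auto
    then have "s \<le> ln ?PV - ln ?Q"
      using \<open>?Q > 0\<close> by (simp add: ln_mult)
    then have "1 \<le> exp (l * (ln ?PV - ln ?Q) - l * s)"
      using assms by (simp add: right_diff_distrib[symmetric] mult_left_mono)
    then have "?PU * ?PV * 1 \<le> ?PU * ?PV * exp (l * (ln ?PV - ln ?Q) - l * s)"
      by (intro mult_left_mono) (simp_all add: input_prob_nonneg channel_prob_nonneg)
    also have "\<dots> = exp (- (l * s)) * (?PU * ?PV * exp (l * (ln ?PV - ln ?Q)))"
      by (simp add: exp_add[symmetric] mult_ac)
    also have "\<dots> = exp (- (l * s)) * ?tilted"
      using True by (simp add: prod_tilted_joint_weights)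
    finally show ?thesis using True by simp
  qed
qed

lemma atypical_mass_le_mgf:
  fixes PhiU :: "'w \<Rightarrow> 'u::finite pmf" and PhiV :: "'w \<Rightarrow> 'u \<Rightarrow> 'v::finite pmf"
  assumes "l \<ge> 0"
  shows "atypical_mass PhiU PhiV ws (exp s) \<le> exp (- (l * s)) * (\<Prod>t<length ws.
           measure_pmf.expectation (joint_pmf PhiU PhiV (ws ! t))
             (\<lambda>(u, v). exp (l * info_density PhiU PhiV (ws ! t) u v)))"
proof -
  let ?n = "length ws"
  define G where "G = (\<lambda>t u v. pmf (PhiU (ws ! t)) u * pmf (PhiV (ws ! t) u) v
                               * exp (l * info_density PhiU PhiV (ws ! t) u v))"
  have "atypical_mass PhiU PhiV ws (exp s)
      \<le> (\<Sum>vs\<in>words ?n. \<Sum>us\<in>words ?n. exp (- (l * s)) * (\<Prod>t<?n. G t (us ! t) (vs ! t)))"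
    unfolding atypical_mass_def G_def by (intro sum_mono atypical_term_le_tilted assms)
  also have "\<dots> = exp (- (l * s)) * (\<Sum>us\<in>words ?n. \<Sum>vs\<in>words ?n. \<Prod>t<?n. G t (us ! t) (vs ! t))"
    by (subst sum.swap) (simp add: sum_distrib_left)
  also have "(\<Sum>us\<in>words ?n. \<Sum>vs\<in>words ?n. \<Prod>t<?n. G t (us ! t) (vs ! t))
      = (\<Sum>us\<in>words ?n. \<Prod>t<?n. \<Sum>v\<in>UNIV. G t (us ! t) v)"
    by (intro sum.cong refl) (rule sum_words_prod_nth)
  also have "\<dots> = (\<Prod>t<?n. \<Sum>u\<in>UNIV. \<Sum>v\<in>UNIV. G t u v)"
    by (rule sum_words_prod_nth)
  finally show ?thesis
    by (simp add: G_def expectation_joint_pmf)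
qed

lemma atypical_mass_le_exp:
  fixes PhiU :: "'w::finite \<Rightarrow> 'u::finite pmf" and PhiV :: "'w \<Rightarrow> 'u \<Rightarrow> 'v::finite pmf"
    and ws :: "'w list" and l s :: real
  assumes "l \<ge> 0"
  defines "n \<equiv> length ws" and "L \<equiv> info_bound PhiU PhiV"
  shows "atypical_mass PhiU PhiV ws (exp s)
       \<le> exp (l * (ln 2 * n * condMI (empdist ws) PhiU PhiV - s) + n * l\<^sup>2 * L\<^sup>2 / 2)"
proof -
  let ?E = "\<lambda>w. measure_pmf.expectation (joint_pmf PhiU PhiV w)"
  let ?dens = "\<lambda>w (u, v). info_density PhiU PhiV w u v"
  have Hoeffding: "?E w (\<lambda>x. exp (l * ?dens w x)) \<le> exp (l * ?E w (?dens w) + l\<^sup>2 * L\<^sup>2 / 2)" for w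
  proof -
    have "- L \<le> info_density PhiU PhiV w u v" "info_density PhiU PhiV w u v \<le> L" for u v
      using abs_info_density_le[of PhiU PhiV w u v] by (simp_all add: L_def abs_le_iff)
    then have "?E w (\<lambda>x. exp (l * ?dens w x)) \<le> exp (l * ?E w (?dens w) + l\<^sup>2 * (L - (- L))\<^sup>2 / 8)"
      using assms(1) by (intro measure_pmf_Hoeffdings_lemma) auto
    moreover have "l\<^sup>2 * (L - (- L))\<^sup>2 / 8 = l\<^sup>2 * L\<^sup>2 / 2"
      by (simp add: power2_eq_square)
    ultimately show ?thesis by (simp add: ac_simps)
  qed
  have "atypical_mass PhiU PhiV ws (exp s)
      \<le> exp (- (l * s)) * (\<Prod>t<n. ?E (ws ! t) (\<lambda>x. exp (l * ?dens (ws ! t) x)))"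
    unfolding n_def using atypical_mass_le_mgf[OF assms(1), of PhiU PhiV ws s]
    by (simp add: case_prod_unfold)
  also have "\<dots> \<le> exp (- (l * s)) * (\<Prod>t<n. exp (l * ?E (ws ! t) (?dens (ws ! t)) + l\<^sup>2 * L\<^sup>2 / 2))"
    by (intro mult_left_mono prod_mono conjI Hoeffding) (simp_all add: integral_nonneg)
  also have "\<dots> = exp (- (l * s)) * exp (\<Sum>t<n. l * ?E (ws ! t) (?dens (ws ! t)) + l\<^sup>2 * L\<^sup>2 / 2)"
    by (simp add: exp_sum)
  also have "\<dots> = exp (l * ((\<Sum>t<n. ?E (ws ! t) (?dens (ws ! t))) - s) + n * l\<^sup>2 * L\<^sup>2 / 2)"
    by (subst exp_add[symmetric]) (simp add: sum.distrib sum_distrib_left algebra_simps)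
  also have "(\<Sum>t<n. ?E (ws ! t) (?dens (ws ! t))) = n * (\<Sum>w\<in>UNIV. empdist ws w * ?E w (?dens w))"
    unfolding n_def by (rule sum_nth_eq_empdist)
  also have "\<dots> = ln 2 * n * condMI (empdist ws) PhiU PhiV"
    by (simp add: condMI_eq_expectation_info_density[symmetric] mult_ac)
  finally show ?thesis .
qed

section \<open>Rates\<close>

lemma sqrt_exp: "sqrt (exp x) = exp (x / 2)"
  by (rule real_sqrt_unique) (simp_all add: power2_eq_square flip: exp_add)

lemma sqrt_exp_div_cbsize_le:
  assumes "s \<le> ln 2 * n * (R - g / 2)"
  shows "sqrt (exp s / cbsize n R) \<le> exp (- (ln 2 * g / 4 * n))"
proof -
  have "exp s / cbsize n R \<le> exp s / 2 powr (n * R)"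
    using cbsize_ge[of n R] cbsize_pos[of n R] by (intro divide_left_mono) auto
  also have "\<dots> = exp (s - ln 2 * n * R)"
    by (simp add: powr_def exp_diff mult_ac)
  also have "\<dots> \<le> exp (- (ln 2 * g / 2 * n))"
    using assms by (simp add: algebra_simps)
  finally show ?thesis
    by (subst (asm) real_sqrt_le_iff[symmetric]) (simp add: sqrt_exp)
qed

lemma exp_tv_le_exponentials:
  fixes PhiU :: "'w::finite \<Rightarrow> 'u::finite pmf" and PhiV :: "'w \<Rightarrow> 'u \<Rightarrow> 'v::finite pmf"
  assumes "g > 0" "ws \<in> words n" and R: "R > condMI (empdist ws) PhiU PhiV + g"
  defines "L \<equiv> info_bound PhiU PhiV"
  shows "exp_tv PhiU PhiV n R ws
       \<le> exp (- ((ln 2 * g)\<^sup>2 / (8 * L\<^sup>2) * n)) + exp (- (ln 2 * g / 4 * n)) / 2"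
proof -
  define I where "I = condMI (empdist ws) PhiU PhiV"
  (* The threshold exp s = 2^(n (I + g/2)) keeps a margin of at least n g/2 from both 2^(n I)
     and 2^(n R); l minimises the exponent given by atypical_mass_le_exp. *)
  define s where "s = ln 2 * n * (I + g / 2)"
  define l where "l = ln 2 * g / (2 * L\<^sup>2)"
  have n: "n = length ws" using assms(2) by (simp add: words_def)
  have L: "L \<ge> 1" unfolding L_def by (rule info_bound_ge_1)
  have "atypical_mass PhiU PhiV ws (exp s) \<le> exp (l * (ln 2 * n * I - s) + n * l\<^sup>2 * L\<^sup>2 / 2)"
    unfolding n L_def I_def using assms(1) by (intro atypical_mass_le_exp) (simp add: l_def)
  also have "l * (ln 2 * n * I - s) + n * l\<^sup>2 * L\<^sup>2 / 2 = - ((ln 2 * g)\<^sup>2 / (8 * L\<^sup>2) * n)"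
    using L by (simp add: s_def l_def field_simps power2_eq_square)
  finally have atypical: "atypical_mass PhiU PhiV ws (exp s)
      \<le> exp (- ((ln 2 * g)\<^sup>2 / (8 * L\<^sup>2) * n))" .
  have "ln 2 * n * (I + g) \<le> ln 2 * n * R"
    using R by (intro mult_left_mono) (auto simp: I_def)
  then have "sqrt (exp s / cbsize n R) \<le> exp (- (ln 2 * g / 4 * n))"
    by (intro sqrt_exp_div_cbsize_le) (simp add: s_def algebra_simps)
  then show ?thesis
    using exp_tv_le_atypical_mass[of "exp s" PhiU PhiV ws R, OF exp_ge_zero, folded n] atypical
    by linarith
qed

(* For g <= 0 the second summand is at least 1, so the bound also holds, trivially. *)
definition soft_covering_bound :: "real \<Rightarrow> real \<Rightarrow> nat \<Rightarrow> real" where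
  "soft_covering_bound L g n = exp (- ((ln 2 * g)\<^sup>2 / (8 * L\<^sup>2) * n)) + exp (- (ln 2 * g / 4 * n))"

lemma exp_tv_less_soft_covering_bound:
  fixes PhiU :: "'w::finite \<Rightarrow> 'u::finite pmf" and PhiV :: "'w \<Rightarrow> 'u \<Rightarrow> 'v::finite pmf"
  assumes "ws \<in> words n" and "R > condMI (empdist ws) PhiU PhiV + g"
  shows "exp_tv PhiU PhiV n R ws < soft_covering_bound (info_bound PhiU PhiV) g n"
proof (cases "g > 0")
  case True
  then show ?thesis
    using exp_tv_le_exponentials[OF True assms] exp_gt_zero[of "- (ln 2 * g / 4 * n)"]
    unfolding soft_covering_bound_def by linarith
next
  case False
  then have "ln 2 * g \<le> 0"
    by (simp add: mult_nonneg_nonpos)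
  then have "1 \<le> exp (- (ln 2 * g / 4 * n))"
    by (simp add: mult_nonpos_nonneg divide_nonpos_pos)
  moreover have "exp_tv PhiU PhiV n R ws \<le> 1"
    using exp_tv_le_1[of PhiU PhiV ws R] assms(1) by (simp add: words_def)
  ultimately show ?thesis
    using exp_gt_zero[of "- ((ln 2 * g)\<^sup>2 / (8 * (info_bound PhiU PhiV)\<^sup>2) * n)"]
    unfolding soft_covering_bound_def by linarith
qed

lemma exp_neg_tendsto_0:
  fixes f :: "'a \<Rightarrow> real"
  assumes "filterlim f at_top F"
  shows "((\<lambda>x. exp (- f x)) \<longlongrightarrow> 0) F"
  using assms by (intro filterlim_compose[OF exp_at_bot]) (simp add: filterlim_uminus_at_top)

lemma soft_covering_bound_tendsto_0:
  assumes "L > 0" and \<gamma>: "filterlim (\<lambda>n. \<gamma> n * sqrt (real n)) at_top sequentially"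
  shows "(\<lambda>n. soft_covering_bound L (\<gamma> n) n) \<longlonglongrightarrow> 0"
proof -
  have sqrt: "filterlim (\<lambda>n. sqrt (real n)) at_top sequentially"
    by (rule filterlim_compose[OF sqrt_at_top filterlim_real_sequentially])
  have "(\<lambda>n. (ln 2 * \<gamma> n)\<^sup>2 / (8 * L\<^sup>2) * n) = (\<lambda>n. (ln 2)\<^sup>2 / (8 * L\<^sup>2) * (\<gamma> n * sqrt n)\<^sup>2)"
    by (simp add: fun_eq_iff power_mult_distrib)
  moreover have "filterlim (\<lambda>n. (ln 2)\<^sup>2 / (8 * L\<^sup>2) * (\<gamma> n * sqrt n)\<^sup>2) at_top sequentially"
    using assms(1)
    by (intro filterlim_tendsto_pos_mult_at_top[OF tendsto_const] filterlim_pow_at_top \<gamma>) auto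
  ultimately have first: "filterlim (\<lambda>n. (ln 2 * \<gamma> n)\<^sup>2 / (8 * L\<^sup>2) * n) at_top sequentially"
    by simp
  have "(\<lambda>n. ln 2 * \<gamma> n / 4 * n) = (\<lambda>n. ln 2 / 4 * (sqrt n * (\<gamma> n * sqrt n)))"
    by (simp add: fun_eq_iff)
  moreover have "filterlim (\<lambda>n. ln 2 / 4 * (sqrt n * (\<gamma> n * sqrt n))) at_top sequentially"
    by (intro filterlim_tendsto_pos_mult_at_top[OF tendsto_const]
        filterlim_at_top_mult_at_top sqrt \<gamma>) simp
  ultimately have second: "filterlim (\<lambda>n. ln 2 * \<gamma> n / 4 * n) at_top sequentially"
    by simp
  show ?thesis
    unfolding soft_covering_bound_def by (intro tendsto_add_zero exp_neg_tendsto_0 first second)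
qed

lemma soft_covering_bound_exponential:
  assumes "L > 0" "g > 0"
  obtains a where "a > 0" "\<And>n. soft_covering_bound L g n \<le> 2 * exp (- a * real n)"
proof
  define a where "a = min ((ln 2 * g)\<^sup>2 / (8 * L\<^sup>2)) (ln 2 * g / 4)"
  show "a > 0" using assms by (simp add: a_def)
  have mono: "exp (- (c * n)) \<le> exp (- a * n)" if "a \<le> c" for c and n :: nat
    using that by (simp add: mult_right_mono)
  show "soft_covering_bound L g n \<le> 2 * exp (- a * real n)" for n
    using add_mono[OF mono[of "(ln 2 * g)\<^sup>2 / (8 * L\<^sup>2)" n] mono[of "ln 2 * g / 4" n]]
    by (simp add: soft_covering_bound_def a_def)
qed

theorem mainTheorem14:
  fixes PhiU :: "'w::finite \<Rightarrow> 'u::finite pmf"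
    and PhiV :: "'w \<Rightarrow> 'u \<Rightarrow> 'v::finite pmf"
    and \<gamma> :: "nat \<Rightarrow> real"
  assumes "filterlim (\<lambda>n. \<gamma> n * sqrt (real n)) at_top sequentially"
  shows "(\<exists>\<epsilon> :: nat \<Rightarrow> real. \<epsilon> \<longlonglongrightarrow> 0 \<and>
           (\<forall>n R ws. ws \<in> words n \<and> R > condMI (empdist ws) PhiU PhiV + \<gamma> n
              \<longrightarrow> exp_tv PhiU PhiV n R ws < \<epsilon> n)) \<and>
         ((\<exists>g>0. \<forall>n. \<gamma> n = g) \<longrightarrow>
         (\<exists>(\<epsilon> :: nat \<Rightarrow> real) a K. a > 0 \<and> (\<forall>n. \<epsilon> n \<le> K * exp (- a * real n)) \<and>
           (\<forall>n R ws. ws \<in> words n \<and> R > condMI (empdist ws) PhiU PhiV + \<gamma> n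
              \<longrightarrow> exp_tv PhiU PhiV n R ws < \<epsilon> n)))"
proof -
  define L where "L = info_bound PhiU PhiV"
  define \<epsilon> where "\<epsilon> = (\<lambda>n. soft_covering_bound L (\<gamma> n) n)"
  have L: "L > 0"
    using info_bound_ge_1[of PhiU PhiV] by (simp add: L_def)
  have bound: "\<forall>n R ws. ws \<in> words n \<and> R > condMI (empdist ws) PhiU PhiV + \<gamma> n
      \<longrightarrow> exp_tv PhiU PhiV n R ws < \<epsilon> n"
    by (auto simp: \<epsilon>_def L_def intro: exp_tv_less_soft_covering_bound)
  have "\<epsilon> \<longlonglongrightarrow> 0"
    unfolding \<epsilon>_def using L assms by (rule soft_covering_bound_tendsto_0)
  moreover have "\<exists>\<epsilon> a K. a > 0 \<and> (\<forall>n. \<epsilon> n \<le> K * exp (- a * real n)) \<and>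
      (\<forall>n R ws. ws \<in> words n \<and> R > condMI (empdist ws) PhiU PhiV + \<gamma> n
         \<longrightarrow> exp_tv PhiU PhiV n R ws < \<epsilon> n)"
    if g: "g > 0" and \<gamma>_const: "\<And>n. \<gamma> n = g" for g
  proof -
    obtain a where "a > 0" "\<And>n. \<epsilon> n \<le> 2 * exp (- a * real n)"
      using soft_covering_bound_exponential[OF L g] \<gamma>_const unfolding \<epsilon>_def by metis
    then show ?thesis using bound by blast
  qed
  ultimately show ?thesis using bound by blast
qed

end
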